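(* Let $(E\to M,\rho,\langle\cdot,\cdot\rangle,\circ)$ be a Courant algebroid and $(\mathbf I,\mathbf J,\mathbf K)$ an almost hypercomplex structure on $E$. There exists a hypercomplex connection $\nabla$ satisfying $\nabla\mathbf I=\nabla\mathbf J=\nabla\mathbf K=0$ and $$T(X,Y)=\mathbf ID\langle X,\mathbf IY\rangle+\mathbf JD\langle X,\mathbf JY\rangle+\mathbf KD\langle X,\mathbf KY\rangle\quad\text{for all }X,Y\in\Gamma(E)$$ if and only if $N_{\mathbf I,\mathbf J}=0$. In that case this connection coincides with each of the three hypercomplex connections $$\nabla_XY=-\tfrac12\mathbf K\big(\mathbf JY\circ\mathbf IX-\mathbf J(Y\circ\mathbf IX)-\mathbf I(\mathbf JY\circ X)+\mathbf J\mathbf I(Y\circ X)\big),$$ $$\nabla'_XY=-\tfrac12\mathbf I\big(\mathbf KY\circ\mathbf JX-\mathbf K(Y\circ\mathbf JX)-\mathbf J(\mathbf KY\circ X)+\mathbf K\mathbf J(Y\circ X)\big),$$ $$\nabla''_XY=-\tfrac12\mathbf J\big(\mathbf IY\circ\mathbf KX-\mathbf I(Y\circ\mathbf KX)-\mathbf K(\mathbf IY\circ X)+\mathbf I\mathbf K(Y\circ X)\big).$$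
   Context: A Courant algebroid $(E\to M,\rho,\langle\cdot,\cdot\rangle,\circ)$ consists of a real vector bundle $E\to M$ over a smooth manifold, a nondegenerate symmetric fiberwise bilinear pairing $\langle\cdot,\cdot\rangle$ on $E$, a vector bundle map $\rho:E\to TM$ (the anchor), and an $\mathbb R$-bilinear operation $\circ$ on $\Gamma(E)$ (the Dorfman bracket) such that for all $f\in C^\infty(M)$, $x,y,z\in\Gamma(E)$: $x\circ(y\circ z)=(x\circ y)\circ z+y\circ(x\circ z)$; $\rho(x\circ y)=[\rho(x),\rho(y)]$; $x\circ(fy)=(\rho(x)f)y+f(x\circ y)$; $x\circ y+y\circ x=2D\langle x,y\rangle$; $(Df)\circ x=0$; $\rho(x)\langle y,z\rangle=\langle x\circ y,z\rangle+\langle y,x\circ z\rangle$. Here $D:C^\infty(M)\to\Gamma(E)$ is the $\mathbb R$-linear map defined by $\langle Df,x\rangle=\tfrac12\rho(x)f$. The Courant bracket is $[\![x,y]\!]=\tfrac12(x\circ y-y\circ x)$. For vector bundle endomorphisms $F,G$ of $E$ (over $\mathrm{id}_M$), the Nijenhuis concomitant is the tensor $N_{F,G}:E\otimes E\to E$ given by $N_{F,G}(X,Y)=FX\circ GY-F(X\circ GY)-G(FX\circ Y)+FG(X\circ Y)+GX\circ FY-G(X\circ FY)-F(GX\circ Y)+GF(X\circ Y)$. An almost hypercomplex structure on $E$ is a triple $(\mathbf I,\mathbf J,\mathbf K)$ of vector bundle endomorphisms of $E$ over $\mathrm{id}_M$, each orthogonal for $\langle\cdot,\cdot\rangle$, with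 $\mathbf I^2=\mathbf J^2=\mathbf K^2=\mathbf I\mathbf J\mathbf K=-1$. Given an almost hypercomplex structure, for $f\in C^\infty(M)$ and $X,Y\in\Gamma(E)$ set $\Delta_f(X,Y)=\langle X,Y\rangle Df+\langle\mathbf IX,Y\rangle\mathbf I Df+\langle\mathbf JX,Y\rangle\mathbf JDf+\langle\mathbf KX,Y\rangle\mathbf KDf$. A hypercomplex connection is an $\mathbb R$-bilinear map $\Gamma(E)\times\Gamma(E)\to\Gamma(E)$, $(X,Y)\mapsto\nabla_XY$, with $\nabla_{fX}Y=f\nabla_XY$ and $\nabla_X(fY)=(\rho(X)f)Y+f\nabla_XY-\Delta_f(X,Y)$. Its torsion is $T(X,Y)=\nabla_XY-\nabla_YX-[\![X,Y]\!]$. For an endomorphism $P$ of $E$, $(\nabla_XP)Y:=\nabla_X(PY)-P(\nabla_XY)$, and $\nabla P=0$ means this vanishes for all $X,Y$. *)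

theory Defs
  imports Main "HOL.Real_Vector_Spaces"
begin

text \<open>Algebraic model of a Courant algebroid.
  'f plays the role of the commutative real algebra C^\<infinity>(M) of smooth functions,
  'e the role of the C^\<infinity>(M)-module of sections Gamma(E), with module action smul.
  Vector fields are modelled as R-linear derivations of 'f (rho x is the vector field rho(x)).\<close>

definition is_module :: "('f::comm_ring_1 \<Rightarrow> 'e::ab_group_add \<Rightarrow> 'e) \<Rightarrow> bool" where
  "is_module smul \<longleftrightarrow>
     (\<forall>f x y. smul f (x + y) = smul f x + smul f y) \<and>
     (\<forall>f g x. smul (f + g) x = smul f x + smul g x) \<and>
     (\<forall>f g x. smul (f * g) x = smul f (smul g x)) \<and>
     (\<forall>x. smul 1 x = x)"

definition courant_algebroid ::
  "('f::{comm_ring_1,real_algebra_1} \<Rightarrow> 'e::ab_group_add \<Rightarrow> 'e) \<Rightarrow> ('e \<Rightarrow> 'f \<Rightarrow> 'f)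
   \<Rightarrow> ('e \<Rightarrow> 'e \<Rightarrow> 'f) \<Rightarrow> ('e \<Rightarrow> 'e \<Rightarrow> 'e) \<Rightarrow> ('f \<Rightarrow> 'e) \<Rightarrow> bool" where
  "courant_algebroid smul rho pair dorf D \<longleftrightarrow>
     is_module smul \<and>
     \<comment> \<open>pairing: symmetric, C-infinity-bilinear, nondegenerate\<close>
     (\<forall>x y. pair x y = pair y x) \<and>
     (\<forall>x y z. pair (x + y) z = pair x z + pair y z) \<and>
     (\<forall>f x y. pair (smul f x) y = f * pair x y) \<and>
     (\<forall>x. (\<forall>y. pair x y = 0) \<longrightarrow> x = 0) \<and>
     \<comment> \<open>anchor: bundle map into vector fields (R-linear derivations)\<close>
     (\<forall>x y f. rho (x + y) f = rho x f + rho y f) \<and>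
     (\<forall>g x f. rho (smul g x) f = g * rho x f) \<and>
     (\<forall>x f g. rho x (f + g) = rho x f + rho x g) \<and>
     (\<forall>x f g. rho x (f * g) = rho x f * g + f * rho x g) \<and>
     (\<forall>x c f. rho x (scaleR c f) = scaleR c (rho x f)) \<and>
     \<comment> \<open>Dorfman bracket is R-bilinear\<close>
     (\<forall>x y z. dorf (x + y) z = dorf x z + dorf y z) \<and>
     (\<forall>x y z. dorf x (y + z) = dorf x y + dorf x z) \<and>
     (\<forall>c x y. dorf (smul (of_real c) x) y = smul (of_real c) (dorf x y)) \<and>
     (\<forall>c x y. dorf x (smul (of_real c) y) = smul (of_real c) (dorf x y)) \<and>
     \<comment> \<open>D is defined by pair (D f) x = 1/2 rho(x) f\<close>
     (\<forall>f x. pair (D f) x = of_real (1/2) * rho x f) \<and>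
     \<comment> \<open>Courant algebroid axioms\<close>
     (\<forall>x y z. dorf x (dorf y z) = dorf (dorf x y) z + dorf y (dorf x z)) \<and>
     (\<forall>x y f. rho (dorf x y) f = rho x (rho y f) - rho y (rho x f)) \<and>
     (\<forall>x f y. dorf x (smul f y) = smul (rho x f) y + smul f (dorf x y)) \<and>
     (\<forall>x y. dorf x y + dorf y x = smul 2 (D (pair x y))) \<and>
     (\<forall>f x. dorf (D f) x = 0) \<and>
     (\<forall>x y z. rho x (pair y z) = pair (dorf x y) z + pair y (dorf x z))"

text \<open>Vector bundle endomorphism over the identity = C-infinity-linear map on sections.\<close>
definition bundle_endo :: "('f \<Rightarrow> 'e::ab_group_add \<Rightarrow> 'e) \<Rightarrow> ('e \<Rightarrow> 'e) \<Rightarrow> bool" where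
  "bundle_endo smul F \<longleftrightarrow> (\<forall>x y. F (x + y) = F x + F y) \<and> (\<forall>f x. F (smul f x) = smul f (F x))"

definition orthogonal_endo :: "('e \<Rightarrow> 'e \<Rightarrow> 'f) \<Rightarrow> ('e \<Rightarrow> 'e) \<Rightarrow> bool" where
  "orthogonal_endo pair F \<longleftrightarrow> (\<forall>x y. pair (F x) (F y) = pair x y)"

definition almost_hypercomplex ::
  "('f \<Rightarrow> 'e::ab_group_add \<Rightarrow> 'e) \<Rightarrow> ('e \<Rightarrow> 'e \<Rightarrow> 'f) \<Rightarrow> ('e \<Rightarrow> 'e) \<Rightarrow> ('e \<Rightarrow> 'e) \<Rightarrow> ('e \<Rightarrow> 'e) \<Rightarrow> bool" where
  "almost_hypercomplex smul pair I J K \<longleftrightarrow>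
     bundle_endo smul I \<and> bundle_endo smul J \<and> bundle_endo smul K \<and>
     orthogonal_endo pair I \<and> orthogonal_endo pair J \<and> orthogonal_endo pair K \<and>
     (\<forall>x. I (I x) = - x) \<and> (\<forall>x. J (J x) = - x) \<and> (\<forall>x. K (K x) = - x) \<and>
     (\<forall>x. I (J (K x)) = - x)"

definition nijenhuis_conc :: "('e \<Rightarrow> 'e \<Rightarrow> 'e::ab_group_add) \<Rightarrow> ('e \<Rightarrow> 'e) \<Rightarrow> ('e \<Rightarrow> 'e) \<Rightarrow> 'e \<Rightarrow> 'e \<Rightarrow> 'e" where
  "nijenhuis_conc dorf F G X Y =
     dorf (F X) (G Y) - F (dorf X (G Y)) - G (dorf (F X) Y) + F (G (dorf X Y))
   + dorf (G X) (F Y) - G (dorf X (F Y)) - F (dorf (G X) Y) + G (F (dorf X Y))"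

definition courant_bracket :: "('f::real_algebra_1 \<Rightarrow> 'e::ab_group_add \<Rightarrow> 'e) \<Rightarrow> ('e \<Rightarrow> 'e \<Rightarrow> 'e) \<Rightarrow> 'e \<Rightarrow> 'e \<Rightarrow> 'e" where
  "courant_bracket smul dorf x y = smul (of_real (1/2)) (dorf x y - dorf y x)"

definition Delta ::
  "('f \<Rightarrow> 'e::ab_group_add \<Rightarrow> 'e) \<Rightarrow> ('e \<Rightarrow> 'e \<Rightarrow> 'f) \<Rightarrow> ('f \<Rightarrow> 'e) \<Rightarrow> ('e \<Rightarrow> 'e) \<Rightarrow> ('e \<Rightarrow> 'e) \<Rightarrow> ('e \<Rightarrow> 'e)
   \<Rightarrow> 'f \<Rightarrow> 'e \<Rightarrow> 'e \<Rightarrow> 'e" where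
  "Delta smul pair D I J K f X Y =
     smul (pair X Y) (D f) + smul (pair (I X) Y) (I (D f))
   + smul (pair (J X) Y) (J (D f)) + smul (pair (K X) Y) (K (D f))"

definition hypercomplex_connection ::
  "('f::{comm_ring_1,real_algebra_1} \<Rightarrow> 'e::ab_group_add \<Rightarrow> 'e) \<Rightarrow> ('e \<Rightarrow> 'f \<Rightarrow> 'f) \<Rightarrow> ('e \<Rightarrow> 'e \<Rightarrow> 'f)
   \<Rightarrow> ('f \<Rightarrow> 'e) \<Rightarrow> ('e \<Rightarrow> 'e) \<Rightarrow> ('e \<Rightarrow> 'e) \<Rightarrow> ('e \<Rightarrow> 'e) \<Rightarrow> ('e \<Rightarrow> 'e \<Rightarrow> 'e) \<Rightarrow> bool" where
  "hypercomplex_connection smul rho pair D I J K nabla \<longleftrightarrow>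
     \<comment> \<open>R-bilinear\<close>
     (\<forall>X X' Y. nabla (X + X') Y = nabla X Y + nabla X' Y) \<and>
     (\<forall>X Y Y'. nabla X (Y + Y') = nabla X Y + nabla X Y') \<and>
     (\<forall>c X Y. nabla (smul (of_real c) X) Y = smul (of_real c) (nabla X Y)) \<and>
     (\<forall>c X Y. nabla X (smul (of_real c) Y) = smul (of_real c) (nabla X Y)) \<and>
     \<comment> \<open>C-infinity-linear in X, modified Leibniz rule in Y\<close>
     (\<forall>f X Y. nabla (smul f X) Y = smul f (nabla X Y)) \<and>
     (\<forall>f X Y. nabla X (smul f Y) = smul (rho X f) Y + smul f (nabla X Y) - Delta smul pair D I J K f X Y)"

definition torsion :: "('f::real_algebra_1 \<Rightarrow> 'e::ab_group_add \<Rightarrow> 'e) \<Rightarrow> ('e \<Rightarrow> 'e \<Rightarrow> 'e) \<Rightarrow> ('e \<Rightarrow> 'e \<Rightarrow> 'e) \<Rightarrow> 'e \<Rightarrow> 'e \<Rightarrow> 'e" where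
  "torsion smul dorf nabla X Y = nabla X Y - nabla Y X - courant_bracket smul dorf X Y"

text \<open>(nabla_X P) Y = nabla_X (P Y) - P (nabla_X Y); "nabla P = 0" means this vanishes identically.\<close>
definition parallel :: "('e \<Rightarrow> 'e \<Rightarrow> 'e::ab_group_add) \<Rightarrow> ('e \<Rightarrow> 'e) \<Rightarrow> bool" where
  "parallel nabla P \<longleftrightarrow> (\<forall>X Y. nabla X (P Y) - P (nabla X Y) = 0)"

text \<open>The connection of the theorem with an explicit formula: nabla_X Y = -1/2 C(BY o AX - B(Y o AX) - A(BY o X) + BA(Y o X)).
  For (A,B,C) = (I,J,K), (J,K,I), (K,I,J) this gives nabla, nabla', nabla''.\<close>
definition formula_connection ::
  "('f::real_algebra_1 \<Rightarrow> 'e::ab_group_add \<Rightarrow> 'e) \<Rightarrow> ('e \<Rightarrow> 'e \<Rightarrow> 'e) \<Rightarrow> ('e \<Rightarrow> 'e) \<Rightarrow> ('e \<Rightarrow> 'e) \<Rightarrow> ('e \<Rightarrow> 'e)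
   \<Rightarrow> 'e \<Rightarrow> 'e \<Rightarrow> 'e" where
  "formula_connection smul dorf A B C X Y =
     smul (of_real (-1/2))
       (C (dorf (B Y) (A X) - B (dorf Y (A X)) - A (dorf (B Y) X) + B (A (dorf Y X))))"

end

theory Submission
  imports Defs
begin

(* Key identity: the Courant bracket equals X o Y - D<X,Y>, so any nabla with torsion tau
   recovers the Dorfman bracket as  X o Y = nabla_X Y - nabla_Y X + D<X,Y> - tau(X,Y).
   Substituting this into N_{I,J} and into the three explicit formulas, and letting nabla
   commute with I, J, K, everything cancels: N_{I,J} = 0 and nabla equals each formula
   (necessity and uniqueness).  Conversely, the first formula is always a hypercomplex
   connection; when N_{I,J} = 0 its failure to commute with I, K and the non-tau part of its
   torsion, both of which are expressions in N_{I,J}, vanish (existence). *)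

section \<open>Courant structures\<close>

locale courant_structure =
  fixes smul :: "'f::{comm_ring_1,real_algebra_1} \<Rightarrow> 'e::ab_group_add \<Rightarrow> 'e"
    and rho :: "'e \<Rightarrow> 'f \<Rightarrow> 'f"
    and pair :: "'e \<Rightarrow> 'e \<Rightarrow> 'f"
    and dorf :: "'e \<Rightarrow> 'e \<Rightarrow> 'e"
    and D :: "'f \<Rightarrow> 'e"
  assumes smul_add_right [simp]: "smul f (x + y) = smul f x + smul f y"
    and smul_add_left: "smul (f + g) x = smul f x + smul g x"
    and smul_mult: "smul (f * g) x = smul f (smul g x)"
    and smul_one [simp]: "smul 1 x = x"
    and pair_sym: "pair x y = pair y x"
    and pair_add_left [simp]: "pair (x + y) z = pair x z + pair y z"
    and pair_smul_left [simp]: "pair (smul f x) y = f * pair x y"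
    and pair_nondegenerate: "(\<And>y. pair x y = 0) \<Longrightarrow> x = 0"
    and rho_add: "rho x (f + g) = rho x f + rho x g"
    and rho_mult: "rho x (f * g) = rho x f * g + f * rho x g"
    and rho_scaleR: "rho x (scaleR c f) = scaleR c (rho x f)"
    and dorf_add_left [simp]: "dorf (x + y) z = dorf x z + dorf y z"
    and dorf_add_right [simp]: "dorf x (y + z) = dorf x y + dorf x z"
    and pair_D: "pair (D f) x = of_real (1/2) * rho x f"
    and dorf_smul_right: "dorf x (smul f y) = smul (rho x f) y + smul f (dorf x y)"
    and dorf_symmetric: "dorf x y + dorf y x = smul 2 (D (pair x y))"

lemma courant_algebroid_structure:
  assumes "courant_algebroid smul rho pair dorf D"
  shows "courant_structure smul rho pair dorf D"
  using assms unfolding courant_algebroid_def is_module_def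
  by unfold_locales meson+

context courant_structure
begin

text \<open>Every operation is additive in each argument, so the library locale \<open>additive\<close>
  supplies the rules for zero, negation and difference.\<close>

lemma additive_operations:
  "additive (smul f)" "additive (\<lambda>f. smul f x)" "additive (\<lambda>x. pair x y)" "additive (pair y)"
  "additive (\<lambda>x. dorf x y)" "additive (dorf y)"
  by unfold_locales (simp_all add: smul_add_left pair_sym[of y])

lemma pair_add_right [simp]: "pair z (x + y) = pair z x + pair z y"
  using additive.add[OF additive_operations(4)] .

lemmas linear_rules [simp] =
  additive_operations[THEN additive.zero] additive_operations[THEN additive.minus]
  additive_operations[THEN additive.diff]

lemmas smul_minus_right = additive.minus[OF additive_operations(1)]
  and smul_minus_left = additive.minus[OF additive_operations(2)]
  and smul_diff_right = additive.diff[OF additive_operations(1)]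

lemma smul_two [simp]: "smul 2 x = x + x"
  using smul_add_left[of 1 1 x] by (simp only: one_add_one smul_one)

lemma smul_commute: "smul f (smul g x) = smul g (smul f x)"
  by (metis smul_mult mult.commute)

lemma smul_half_double: "smul (of_real (1/2)) (x + x) = x"
proof -
  have "(of_real (1/2) :: 'f) * 2 = of_real (1/2 * 2)"
    by (simp only: of_real_mult of_real_numeral)
  then have "(of_real (1/2) :: 'f) * 2 = 1"
    by simp
  then show ?thesis
    by (metis smul_two smul_mult smul_one)
qed

lemma smul_neg_half_double: "smul (of_real (-1/2)) (x + x) = - x"
  using smul_half_double[of x] smul_minus_left
  by (metis minus_divide_left of_real_minus)

lemma D_add [simp]: "D (f + g) = D f + D g"
  by (rule eq_iff_diff_eq_0[THEN iffD2], rule pair_nondegenerate)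
     (simp add: pair_D rho_add algebra_simps)

lemma D_mult: "D (f * g) = smul f (D g) + smul g (D f)"
  by (rule eq_iff_diff_eq_0[THEN iffD2], rule pair_nondegenerate)
     (simp add: pair_D rho_mult algebra_simps)

lemma additive_D: "additive D"
  by unfold_locales simp

lemmas D_linear_rules [simp] = additive_D[THEN additive.zero] additive_D[THEN additive.minus]
  additive_D[THEN additive.diff]

lemma rho_const [simp]: "rho x (of_real c) = 0"
proof -
  have "rho x 1 = 0" using rho_mult[of x 1 1] by simp
  then show ?thesis using rho_scaleR[of x c 1] by (simp add: of_real_def)
qed

lemma D_const [simp]: "D (of_real c) = 0"
  by (rule pair_nondegenerate) (simp add: pair_D)

lemma dorf_smul_left:
  "dorf (smul f x) y = smul f (dorf x y) - smul (rho y f) x + smul 2 (smul (pair x y) (D f))"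
proof -
  have "dorf (smul f x) y = smul 2 (D (pair (smul f x) y)) - dorf y (smul f x)"
    using dorf_symmetric[of "smul f x" y] by (simp add: algebra_simps del: smul_two)
  also have "\<dots> = smul 2 (smul f (D (pair x y)) + smul (pair x y) (D f))
                   - smul (rho y f) x - smul f (dorf y x)"
    by (simp add: D_mult dorf_smul_right del: smul_two)
  also have "dorf y x = smul 2 (D (pair x y)) - dorf x y"
    using dorf_symmetric[of x y] by (simp add: algebra_simps pair_sym del: smul_two)
  finally show ?thesis by (simp add: algebra_simps)
qed

lemma courant_bracket_eq: "courant_bracket smul dorf X Y = dorf X Y - D (pair X Y)"
proof -
  have "dorf X Y - dorf Y X = (dorf X Y - D (pair X Y)) + (dorf X Y - D (pair X Y))"
    using dorf_symmetric[of X Y] by (simp add: algebra_simps)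
  then show ?thesis
    unfolding courant_bracket_def by (simp only: smul_half_double)
qed

text \<open>Hence any connection-like operation with known torsion determines the Dorfman bracket.
  This is the identity through which the whole uniqueness half of the theorem runs.\<close>

lemma dorf_by_torsion:
  assumes "torsion smul dorf nabla X Y = T"
  shows "dorf X Y = nabla X Y - nabla Y X + D (pair X Y) - T"
  using assms unfolding torsion_def courant_bracket_eq by (simp add: algebra_simps)

end

section \<open>Quaternionic triples\<close>

locale quaternion_triple =
  fixes I J K :: "'e::ab_group_add \<Rightarrow> 'e"
  assumes I_add [simp]: "I (x + y) = I x + I y"
    and J_add [simp]: "J (x + y) = J x + J y"
    and K_add [simp]: "K (x + y) = K x + K y"
    and II [simp]: "I (I x) = - x"
    and JJ [simp]: "J (J x) = - x"
    and KK [simp]: "K (K x) = - x"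
    and IJK: "I (J (K x)) = - x"
begin

lemma additive_units: "additive I" "additive J" "additive K"
  by unfold_locales simp_all

lemmas unit_linear_rules [simp] = additive_units[THEN additive.zero]
  additive_units[THEN additive.minus] additive_units[THEN additive.diff]

lemma IJ [simp]: "I (J x) = K x"
  using IJK[of "K x"] by simp

lemma IK [simp]: "I (K x) = - J x"
  using II[of "J x"] by simp

lemma KJ [simp]: "K (J x) = - I x"
  using IJ[of "J x"] by simp

lemma JI [simp]: "J (I x) = - K x"
proof -
  have "I (J (I (J y))) = - y" for y
    by simp
  from this[of "J x"] have "I (J (I x)) = J x"
    by simp
  then have "- J (I x) = K x"
    by (metis II IJ)
  then show ?thesis
    by (simp add: minus_equation_iff)
qed

lemma JK [simp]: "J (K x) = I x"
  using JI[of "J x"] by simp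

lemma KI [simp]: "K (I x) = J x"
  using IJ[of "I x"] by simp

end

locale hypercomplex_courant = courant_structure smul rho pair dorf D + quaternion_triple I J K
  for smul :: "'f::{comm_ring_1,real_algebra_1} \<Rightarrow> 'e::ab_group_add \<Rightarrow> 'e"
    and rho pair dorf D and I J K +
  assumes I_smul [simp]: "I (smul f x) = smul f (I x)"
    and J_smul [simp]: "J (smul f x) = smul f (J x)"
    and K_smul [simp]: "K (smul f x) = smul f (K x)"
    and I_orthogonal: "pair (I x) (I y) = pair x y"
    and J_orthogonal: "pair (J x) (J y) = pair x y"
    and K_orthogonal: "pair (K x) (K y) = pair x y"

lemma almost_hypercomplex_structure:
  assumes "courant_algebroid smul rho pair dorf D" and "almost_hypercomplex smul pair I J K"
  shows "hypercomplex_courant smul rho pair dorf D I J K"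
  using courant_algebroid_structure[OF assms(1)] assms(2)
  unfolding almost_hypercomplex_def bundle_endo_def orthogonal_endo_def
  by (intro hypercomplex_courant.intro quaternion_triple.intro hypercomplex_courant_axioms.intro)
     meson+

context hypercomplex_courant
begin

lemma pair_I_left [simp]: "pair (I x) y = - pair x (I y)"
  using I_orthogonal[of "I x" y] by simp

lemma pair_J_left [simp]: "pair (J x) y = - pair x (J y)"
  using J_orthogonal[of "J x" y] by simp

lemma pair_K_left [simp]: "pair (K x) y = - pair x (K y)"
  using K_orthogonal[of "K x" y] by simp

text \<open>The same, for swapped arguments; used only for fixed \<open>X, Y\<close> since the rules would
  loop as general rewrite rules.\<close>

lemma pair_swap:
  "pair Y X = pair X Y" "pair Y (I X) = - pair X (I Y)" "pair Y (J X) = - pair X (J Y)"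
  "pair Y (K X) = - pair X (K Y)"
  by (simp_all add: pair_sym[of Y])

definition hyper_torsion :: "'e \<Rightarrow> 'e \<Rightarrow> 'e" where
  "hyper_torsion X Y = I (D (pair X (I Y))) + J (D (pair X (J Y))) + K (D (pair X (K Y)))"

end

section \<open>Necessity and uniqueness\<close>

lemma hypercomplex_connection_additive:
  assumes "hypercomplex_connection smul rho pair D I J K nabla"
  shows "additive (\<lambda>X. nabla X Y)" "additive (nabla X)"
  using assms unfolding hypercomplex_connection_def by unfold_locales blast+

lemma parallel_commute: "parallel nabla P \<Longrightarrow> nabla X (P Y) = P (nabla X Y)"
  unfolding parallel_def by (metis eq_iff_diff_eq_0)

context hypercomplex_courant
begin

definition admissible_connection :: "('e \<Rightarrow> 'e \<Rightarrow> 'e) \<Rightarrow> bool" where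
  "admissible_connection nabla \<longleftrightarrow> hypercomplex_connection smul rho pair D I J K nabla \<and>
     parallel nabla I \<and> parallel nabla J \<and> parallel nabla K \<and>
     (\<forall>X Y. torsion smul dorf nabla X Y = hyper_torsion X Y)"

lemma admissible_rules:
  assumes "admissible_connection nabla"
  shows "nabla (X + X') Y = nabla X Y + nabla X' Y" "nabla X (Y + Y') = nabla X Y + nabla X Y'"
    "nabla (- X) Y = - nabla X Y" "nabla X (- Y) = - nabla X Y"
    "nabla X (I Y) = I (nabla X Y)" "nabla X (J Y) = J (nabla X Y)"
    "nabla X (K Y) = K (nabla X Y)"
proof -
  have hc: "hypercomplex_connection smul rho pair D I J K nabla"
    and par: "parallel nabla I" "parallel nabla J" "parallel nabla K"
    using assms unfolding admissible_connection_def by blast+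
  note additive = hypercomplex_connection_additive[OF hc]
  show "nabla (X + X') Y = nabla X Y + nabla X' Y" "nabla X (Y + Y') = nabla X Y + nabla X Y'"
    "nabla (- X) Y = - nabla X Y" "nabla X (- Y) = - nabla X Y"
    using additive[THEN additive.add] additive[THEN additive.minus] by blast+
  show "nabla X (I Y) = I (nabla X Y)" "nabla X (J Y) = J (nabla X Y)"
    "nabla X (K Y) = K (nabla X Y)"
    using par by (simp_all add: parallel_commute)
qed

lemma admissible_dorf:
  "admissible_connection nabla \<Longrightarrow>
     dorf X Y = nabla X Y - nabla Y X + D (pair X Y) - hyper_torsion X Y"
  unfolding admissible_connection_def by (blast intro: dorf_by_torsion)

lemma admissible_nijenhuis:
  assumes "admissible_connection nabla"
  shows "nijenhuis_conc dorf I J X Y = 0"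
  unfolding nijenhuis_conc_def admissible_dorf[OF assms] hyper_torsion_def
  by (simp add: admissible_rules[OF assms] pair_swap[where X = X and Y = Y] algebra_simps)

text \<open>Each formula is \<open>-1/2\<close> times a bracket expression; it suffices to show that
  the expression equals \<open>-2\<nabla>\<^sub>XY\<close>.\<close>

lemma formula_from_double: "Q = - (v + v) \<Longrightarrow> smul (of_real (-1/2)) Q = v"
  by (simp only: smul_neg_half_double smul_minus_right minus_minus)

lemma admissible_formulas:
  assumes "admissible_connection nabla"
  shows "nabla X Y = formula_connection smul dorf I J K X Y"
    and "nabla X Y = formula_connection smul dorf J K I X Y"
    and "nabla X Y = formula_connection smul dorf K I J X Y"
  unfolding formula_connection_def
  by (rule sym, rule formula_from_double, simp add: admissible_dorf[OF assms] hyper_torsion_def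
      admissible_rules[OF assms] pair_swap[where X = X and Y = Y] algebra_simps)+

end

section \<open>Existence\<close>

context hypercomplex_courant
begin

definition formula_kernel :: "'e \<Rightarrow> 'e \<Rightarrow> 'e" where
  "formula_kernel X Y = K (dorf (J Y) (I X) - J (dorf Y (I X)) - I (dorf (J Y) X) + J (I (dorf Y X)))"

lemma formula_connection_kernel:
  "formula_connection smul dorf I J K X Y = smul (of_real (-1/2)) (formula_kernel X Y)"
  unfolding formula_connection_def formula_kernel_def ..

lemma formula_kernel_add:
  "formula_kernel (X + X') Y = formula_kernel X Y + formula_kernel X' Y"
  "formula_kernel X (Y + Y') = formula_kernel X Y + formula_kernel X Y'"
  unfolding formula_kernel_def by (simp_all add: algebra_simps)

lemma formula_kernel_smul_left: "formula_kernel (smul f X) Y = smul f (formula_kernel X Y)"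
  unfolding formula_kernel_def by (simp add: dorf_smul_right algebra_simps)

text \<open>In the second argument the kernel fails to be function-linear by twice the defect
  \<open>\<Delta>\<^sub>f(X,Y) - (\<rho>(X)f)Y\<close>, which the factor \<open>-1/2\<close> turns into the Leibniz rule.\<close>

lemma formula_kernel_smul_right:
  "formula_kernel X (smul f Y) = smul f (formula_kernel X Y)
     + (Delta smul pair D I J K f X Y - smul (rho X f) Y)
     + (Delta smul pair D I J K f X Y - smul (rho X f) Y)"
  unfolding formula_kernel_def Delta_def
  by (simp add: dorf_smul_right dorf_smul_left pair_swap[where X = X and Y = Y] algebra_simps)

lemma formula_connection_hypercomplex:
  "hypercomplex_connection smul rho pair D I J K (formula_connection smul dorf I J K)"
proof -
  let ?F = "formula_connection smul dorf I J K"
  have leibniz: "?F X (smul f Y) = smul (rho X f) Y + smul f (?F X Y) - Delta smul pair D I J K f X Y"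
    for f X Y
  proof -
    define w where "w = Delta smul pair D I J K f X Y - smul (rho X f) Y"
    have "?F X (smul f Y) = smul f (?F X Y) + smul (of_real (-1/2)) (w + w)"
      unfolding formula_connection_kernel formula_kernel_smul_right w_def
      by (simp only: add.assoc smul_add_right smul_commute[of "of_real (-1/2)" f])
    then show ?thesis
      unfolding smul_neg_half_double w_def by (simp add: algebra_simps)
  qed
  have "?F X (smul (of_real c) Y) = smul (of_real c) (?F X Y)" for c X Y
    using leibniz[of X "of_real c" Y] by (simp add: Delta_def)
  moreover have "?F (smul f X) Y = smul f (?F X Y)" for f X Y
    unfolding formula_connection_kernel formula_kernel_smul_left by (rule smul_commute)
  ultimately show ?thesis
    unfolding hypercomplex_connection_def
    using leibniz by (simp add: formula_connection_kernel formula_kernel_add)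
qed

lemma formula_kernel_commutators:
  "formula_kernel X (J Y) - J (formula_kernel X Y) = 0"
  "formula_kernel X (I Y) - I (formula_kernel X Y)
     = J (nijenhuis_conc dorf I J Y X) + K (nijenhuis_conc dorf I J (I Y) X)"
  "formula_kernel X (K Y) - K (formula_kernel X Y)
     = nijenhuis_conc dorf I J Y X - I (nijenhuis_conc dorf I J (I Y) X)"
  unfolding formula_kernel_def nijenhuis_conc_def by (simp_all add: algebra_simps)

lemma formula_connection_parallel:
  assumes "\<And>X Y. nijenhuis_conc dorf I J X Y = 0"
  shows "parallel (formula_connection smul dorf I J K) I"
    "parallel (formula_connection smul dorf I J K) J"
    "parallel (formula_connection smul dorf I J K) K"
  unfolding parallel_def formula_connection_kernel I_smul J_smul K_smul smul_diff_right[symmetric]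
  by (simp_all add: formula_kernel_commutators assms)

text \<open>Antisymmetrizing the kernel produces \<open>N\<^sub>I\<^sub>,\<^sub>J\<close>, the Dorfman bracket and twice the
  prescribed torsion, once the symmetric part of the Dorfman bracket is replaced by \<open>D\<close>.\<close>

lemma formula_kernel_skew:
  "formula_kernel X Y - formula_kernel Y X
     = - K (nijenhuis_conc dorf I J X Y) - (dorf X Y - dorf Y X)
       - (hyper_torsion X Y + hyper_torsion X Y)"
proof -
  define sym_defect where
    "sym_defect P Q = dorf P Q + dorf Q P - (D (pair P Q) + D (pair P Q))" for P Q
  have "sym_defect P Q = 0" for P Q
    unfolding sym_defect_def using dorf_symmetric[of P Q] by simp
  moreover have "formula_kernel X Y - formula_kernel Y X + (dorf X Y - dorf Y X)
      + (hyper_torsion X Y + hyper_torsion X Y)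
     = - K (nijenhuis_conc dorf I J X Y) - J (sym_defect X (J Y)) + I (sym_defect (I X) Y)
       + K (sym_defect (I X) (J Y))"
    unfolding formula_kernel_def nijenhuis_conc_def sym_defect_def hyper_torsion_def
    by (simp add: algebra_simps)
  ultimately show ?thesis by (simp add: algebra_simps)
qed

lemma formula_connection_torsion:
  assumes "\<And>X Y. nijenhuis_conc dorf I J X Y = 0"
  shows "torsion smul dorf (formula_connection smul dorf I J K) X Y = hyper_torsion X Y"
proof -
  have half: "of_real (-1/2) = - (of_real (1/2) :: 'f)" by simp
  have "formula_connection smul dorf I J K X Y - formula_connection smul dorf I J K Y X
      = smul (of_real (-1/2)) (- (dorf X Y - dorf Y X) - (hyper_torsion X Y + hyper_torsion X Y))"
    unfolding formula_connection_kernel smul_diff_right[symmetric] formula_kernel_skew assms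
    by simp
  also have "\<dots> = courant_bracket smul dorf X Y + hyper_torsion X Y"
    unfolding courant_bracket_def smul_diff_right smul_neg_half_double
    by (simp only: half smul_minus_left smul_minus_right minus_minus diff_minus_eq_add)
      (simp add: algebra_simps)
  finally show ?thesis
    unfolding torsion_def by (simp add: algebra_simps)
qed

lemma formula_connection_admissible:
  assumes "\<And>X Y. nijenhuis_conc dorf I J X Y = 0"
  shows "admissible_connection (formula_connection smul dorf I J K)"
  unfolding admissible_connection_def
  using formula_connection_hypercomplex formula_connection_parallel[OF assms]
    formula_connection_torsion[OF assms] by blast

end

theorem mainTheorem8:
  fixes smul :: "'f::{comm_ring_1,real_algebra_1} \<Rightarrow> 'e::ab_group_add \<Rightarrow> 'e"
    and rho :: "'e \<Rightarrow> 'f \<Rightarrow> 'f"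
    and pair :: "'e \<Rightarrow> 'e \<Rightarrow> 'f"
    and dorf :: "'e \<Rightarrow> 'e \<Rightarrow> 'e"
    and D :: "'f \<Rightarrow> 'e"
    and I J K :: "'e \<Rightarrow> 'e"
  assumes CA: "courant_algebroid smul rho pair dorf D"
    and HC: "almost_hypercomplex smul pair I J K"
  defines "good \<equiv> \<lambda>nabla.
      hypercomplex_connection smul rho pair D I J K nabla \<and>
      parallel nabla I \<and> parallel nabla J \<and> parallel nabla K \<and>
      (\<forall>X Y. torsion smul dorf nabla X Y =
               I (D (pair X (I Y))) + J (D (pair X (J Y))) + K (D (pair X (K Y))))"
  shows "((\<exists>nabla. good nabla) \<longleftrightarrow> (\<forall>X Y. nijenhuis_conc dorf I J X Y = 0)) \<and>
         ((\<forall>X Y. nijenhuis_conc dorf I J X Y = 0) \<longrightarrow>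
            (\<forall>nabla. good nabla \<longrightarrow>
               (\<forall>X Y. nabla X Y = formula_connection smul dorf I J K X Y \<and>
                      nabla X Y = formula_connection smul dorf J K I X Y \<and>
                      nabla X Y = formula_connection smul dorf K I J X Y)))"
proof -
  interpret hypercomplex_courant smul rho pair dorf D I J K
    using almost_hypercomplex_structure[OF CA HC] .
  have good: "good = admissible_connection"
    unfolding good_def admissible_connection_def hyper_torsion_def ..
  have "(\<exists>nabla. admissible_connection nabla) \<longleftrightarrow> (\<forall>X Y. nijenhuis_conc dorf I J X Y = 0)"
    using admissible_nijenhuis formula_connection_admissible by blast
  moreover have "\<forall>nabla. admissible_connection nabla \<longrightarrow>
      (\<forall>X Y. nabla X Y = formula_connection smul dorf I J K X Y \<and>
             nabla X Y = formula_connection smul dorf J K I X Y \<and>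
             nabla X Y = formula_connection smul dorf K I J X Y)"
    using admissible_formulas by blast
  ultimately show ?thesis unfolding good by blast
qed

end
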